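(* Suppose Assumption A1 holds, and let $I=(\bar x,\bar x+\varepsilon)$ be an interval as in the conclusion of Theorem 2 (i.e. $\varepsilon>0$, $s$ is differentiable and strictly monotone on $I$, and for all $x\in I$, $|s'(x)|=f_{X\mid I}(x)/f_{s(X)\mid I}(s(x))$ with $f_{s(X)\mid I}(s(x))$ existing and nonzero). Let $\theta:=\operatorname{sgn}(s'(\bar x^+))$. Then the limit $f_{s(X)\mid I}(s(\bar x^+)):=\lim_{x\downarrow\bar x}f_{s(X)\mid I}(s(x))$ exists and is nonzero, and $$\mathrm{AME}^+_{\bar x}=m'(\bar x^+)-\theta\cdot\frac{f_{X\mid I}(\bar x^+)}{f_{s(X)\mid I}(s(\bar x^+))},$$ where $f_{X\mid I}(\bar x^+)=f_X(\bar x^+)/P(X\in I)$.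
   Context: Setting. Fix a probability space and a real number $\bar x$. For each real $x\ge\bar x$ there is a real random variable $Y(x)$; $X$ is a real random variable with $X\ge\bar x$ a.s. and $P(X=\bar x)>0$; $Y=Y(X)$. All random variables whose conditional expectations are taken are integrable; conditional expectations given $X=x$ denote fixed versions regarded as functions of $x$. Notation: for $g$ on a right neighbourhood of $\bar x$, $g(\bar x^+):=\lim_{x\downarrow\bar x}g(x)$, $g'(\bar x^+):=\lim_{x\downarrow\bar x}\frac{g(x)-g(\bar x^+)}{x-\bar x}$. For an event $S$ with $P(S)>0$, $f_{V\mid S}$ is the derivative of $v\mapsto P(V\le v\mid S)$ where it exists; $f_{X\mid I}(x)=f_X(x)/P(X\in I)$. $\operatorname{sgn}(v)=\mathbf 1(v\ge0)-\mathbf 1(v\le0)$. Definitions: $\mathrm{ATT}(x):=E[Y(x)-Y(\bar x)\mid X=x]$; $\mathrm{AME}^+_{\bar x}:=\lim_{x\downarrow\bar x}\frac{\mathrm{ATT}(x)}{x-\bar x}$; for $x>\bar x$, $m(x):=E[Y\mid X=x]-E[Y\mid X=\bar x^+]$, $s(x):=E[Y(\bar x)\mid X=x]-E[Y(\bar x)\mid X=\bar x^+]$. Assumption A1: (i) for some $\varepsilon_1>0$, $X$ has a density $f_X$ that exists and is continuous on $(\bar x,\bar x+\varepsilon_1)$, and $f_X(\bar x^+)$ exists and is strictly positive; (ii) $x\mapsto E[Y\mid X=x]$ is differentiable on $(\bar x,\bar x+\varepsilon_2)$ for some $\varepsilon_2>0$, and $E[Y\mid X=\bar x^+]$ and $\lim_{x\downarrow\bar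 x}\frac{d}{dx}E[Y\mid X=x]$ exist; (iii) $x\mapsto E[Y(\bar x)\mid X=x]$ is differentiable on $(\bar x,\bar x+\varepsilon_3)$ for some $\varepsilon_3>0$, and $\lim_{x\downarrow\bar x}\frac{d}{dx}E[Y(\bar x)\mid X=x]$ exists and is nonzero; (iv) $\mathrm{ATT}(\bar x^+)=0$ and $\mathrm{ATT}'(\bar x^+)$ exists. *)

theory Defs
  imports "HOL-Probability.Probability"
begin

definition rlim :: "(real \<Rightarrow> real) \<Rightarrow> real \<Rightarrow> real" where
  "rlim g x0 = Lim (at_right x0) g"

definition rderiv :: "(real \<Rightarrow> real) \<Rightarrow> real \<Rightarrow> real" where
  "rderiv g x0 = Lim (at_right x0) (\<lambda>x. (g x - rlim g x0) / (x - x0))"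

text \<open>g is a (fixed) version of x \<mapsto> E[V | X = x]: a Borel function with
  g(X) a version of E[V | sigma(X)].\<close>
definition is_cond_exp_fun ::
  "'a measure \<Rightarrow> ('a \<Rightarrow> real) \<Rightarrow> ('a \<Rightarrow> real) \<Rightarrow> (real \<Rightarrow> real) \<Rightarrow> bool" where
  "is_cond_exp_fun M X V g \<longleftrightarrow>
     g \<in> borel_measurable borel \<and> integrable M (\<lambda>\<omega>. g (X \<omega>)) \<and>
     (\<forall>A \<in> sets borel.
        (LINT \<omega>:(X -` A \<inter> space M)|M. V \<omega>) = (LINT \<omega>:(X -` A \<inter> space M)|M. g (X \<omega>)))"

end

theory Submission
  imports Defs
begin

text \<open>To the right of \<open>xbar\<close> we have \<open>ATT = E[Y|X] - E[Y(xbar)|X]\<close>, and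
  \<open>ATT(xbar+) = 0\<close> forces both conditional means to share their right limit. Hence
  \<open>ATT(x)/(x - xbar)\<close> is the difference of the difference quotients of \<open>m\<close> and \<open>s\<close>,
  which converge to \<open>m'(xbar+)\<close> and \<open>s'(xbar+) \<noteq> 0\<close> by l'Hopital's rule. Solving
  \<open>|s'| = f\<^sub>X/P(X \<in> I) / f\<^sub>S(s)\<close> for \<open>f\<^sub>S(s)\<close> shows that it converges to
  \<open>f\<^sub>X(xbar+)/P(X \<in> I) / |s'(xbar+)|\<close>, and \<open>s'(xbar+) = sgn s'(xbar+) * |s'(xbar+)|\<close>.\<close>

lemma rlim_eqI: "(g \<longlongrightarrow> L) (at_right a) \<Longrightarrow> rlim g a = L"
  for a :: real
  unfolding rlim_def by (rule tendsto_Lim) simp_all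

lemma diff_quotient_tendsto_deriv_limit:
  fixes g :: "real \<Rightarrow> real"
  assumes diff: "\<forall>\<^sub>F x in at_right a. g differentiable (at x)"
    and lim: "(g \<longlongrightarrow> L) (at_right a)" and deriv_lim: "(deriv g \<longlongrightarrow> D) (at_right a)"
  shows "((\<lambda>x. (g x - L) / (x - a)) \<longlongrightarrow> D) (at_right a)"
proof (rule lhopital_right[where f'="deriv g" and g'="\<lambda>_. 1"])
  show "((\<lambda>x. g x - L) \<longlongrightarrow> 0) (at_right a)"
    using tendsto_diff[OF lim tendsto_const[of L]] by simp
  show "((\<lambda>x. x - a) \<longlongrightarrow> 0) (at_right a)"
    by (rule tendsto_eq_intros refl | simp)+
  show "\<forall>\<^sub>F x in at_right a. x - a \<noteq> 0"
    using eventually_at_right_less[of a] by eventually_elim simp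
  show "\<forall>\<^sub>F x in at_right a. ((\<lambda>x. g x - L) has_real_derivative deriv g x) (at x)"
    using diff by eventually_elim
      (auto intro!: derivative_eq_intros simp: DERIV_deriv_iff_real_differentiable)
  show "\<forall>\<^sub>F x in at_right a. ((\<lambda>x. x - a) has_real_derivative 1) (at x)"
    by (rule always_eventually) (auto intro!: derivative_eq_intros)
  show "((\<lambda>x. deriv g x / 1) \<longlongrightarrow> D) (at_right a)"
    using deriv_lim by simp
qed simp

lemma rderiv_centered_eq_deriv_limit:
  fixes g :: "real \<Rightarrow> real"
  assumes "\<forall>\<^sub>F x in at_right a. g differentiable (at x)"
    and lim: "(g \<longlongrightarrow> L) (at_right a)" and "(deriv g \<longlongrightarrow> D) (at_right a)"
  shows "rderiv (\<lambda>x. g x - rlim g a) a = D"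
proof -
  have centered_lim: "((\<lambda>x. g x - L) \<longlongrightarrow> 0) (at_right a)"
    using tendsto_diff[OF lim tendsto_const[of L]] by simp
  show ?thesis
    unfolding rderiv_def rlim_eqI[OF lim] rlim_eqI[OF centered_lim]
    using diff_quotient_tendsto_deriv_limit[OF assms]
    by (intro tendsto_Lim) simp_all
qed

lemma deriv_diff_const:
  fixes g :: "real \<Rightarrow> real"
  assumes "g differentiable (at x)"
  shows "deriv (\<lambda>x. g x - c) x = deriv g x"
proof -
  have "DERIV (\<lambda>x. g x - c) x :> deriv g x - 0"
    using assms unfolding DERIV_deriv_iff_real_differentiable[symmetric]
    by (intro DERIV_diff DERIV_const)
  then show ?thesis by (simp add: DERIV_imp_deriv)
qed

lemma tendsto_of_diff_tendsto_0:
  fixes f g h :: "'a \<Rightarrow> real"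
  assumes "\<forall>\<^sub>F x in F. h x = f x - g x" and "(h \<longlongrightarrow> 0) F" and "(f \<longlongrightarrow> L) F"
  shows "(g \<longlongrightarrow> L) F"
proof (rule Lim_transform_eventually)
  show "((\<lambda>x. f x - h x) \<longlongrightarrow> L) F"
    using tendsto_diff[OF assms(3,2)] by simp
  show "\<forall>\<^sub>F x in F. f x - h x = g x"
    using assms(1) by eventually_elim simp
qed

lemma Lim_quotient_of_eventually_diff:
  fixes f g h :: "real \<Rightarrow> real"
  assumes h_eq: "\<forall>\<^sub>F x in at_right a. h x = f x - g x"
    and "\<forall>\<^sub>F x in at_right a. f differentiable (at x)" "(f \<longlongrightarrow> L) (at_right a)"
      "(deriv f \<longlongrightarrow> Df) (at_right a)"
    and "\<forall>\<^sub>F x in at_right a. g differentiable (at x)" "(g \<longlongrightarrow> L) (at_right a)"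
      "(deriv g \<longlongrightarrow> Dg) (at_right a)"
  shows "Lim (at_right a) (\<lambda>x. h x / (x - a)) = Df - Dg"
proof (rule tendsto_Lim)
  show "((\<lambda>x. h x / (x - a)) \<longlongrightarrow> Df - Dg) (at_right a)"
  proof (rule Lim_transform_eventually)
    show "((\<lambda>x. (f x - L) / (x - a) - (g x - L) / (x - a)) \<longlongrightarrow> Df - Dg) (at_right a)"
      using assms(2-) by (intro tendsto_diff diff_quotient_tendsto_deriv_limit)
    show "\<forall>\<^sub>F x in at_right a. (f x - L) / (x - a) - (g x - L) / (x - a) = h x / (x - a)"
      using h_eq by eventually_elim (simp add: diff_divide_distrib)
  qed
qed simp

lemma tendsto_divisor_of_abs_eq_divide:
  fixes p q r :: "'a \<Rightarrow> real"
  assumes eq: "\<forall>\<^sub>F x in F. \<bar>p x\<bar> = q x / c / r x"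
    and p: "(p \<longlongrightarrow> P) F" "P \<noteq> 0" and q: "(q \<longlongrightarrow> Q) F" and "F \<noteq> bot"
  shows "c \<noteq> 0" and "(r \<longlongrightarrow> Q / c / \<bar>P\<bar>) F"
proof -
  have "\<forall>\<^sub>F x in F. \<bar>p x\<bar> > 0"
    using order_tendstoD(1)[OF tendsto_rabs[OF p(1)], of 0] p(2) by simp
  with eq have eq': "\<forall>\<^sub>F x in F. \<bar>p x\<bar> = q x / c / r x \<and> \<bar>p x\<bar> > 0"
    by eventually_elim simp
  then obtain x where x: "\<bar>p x\<bar> = q x / c / r x" "\<bar>p x\<bar> > 0"
    using eventually_happens'[OF \<open>F \<noteq> bot\<close>] by blast
  show c_nz: "c \<noteq> 0"
  proof
    assume "c = 0"
    with x show False by simp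
  qed
  from eq' have "\<forall>\<^sub>F x in F. q x / c / \<bar>p x\<bar> = r x"
    by eventually_elim (auto simp: divide_eq_eq)
  moreover have "((\<lambda>x. q x / c / \<bar>p x\<bar>) \<longlongrightarrow> Q / c / \<bar>P\<bar>) F"
    using p c_nz by (intro tendsto_divide q tendsto_rabs tendsto_const) simp_all
  ultimately show "(r \<longlongrightarrow> Q / c / \<bar>P\<bar>) F"
    using Lim_transform_eventually by blast
qed

theorem theorem3:
  fixes M :: "'a measure"
    and X :: "'a \<Rightarrow> real"
    and Yp :: "real \<Rightarrow> 'a \<Rightarrow> real"
    and xbar :: real
    and muY :: "real \<Rightarrow> real"
    and cY :: "real \<Rightarrow> real \<Rightarrow> real"
    and fX fS :: "real \<Rightarrow> real"
    and \<epsilon> \<epsilon>1 \<epsilon>2 \<epsilon>3 :: real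
  defines "Y \<equiv> (\<lambda>\<omega>. Yp (X \<omega>) \<omega>)"
    and "ATT \<equiv> (\<lambda>x. cY x x - cY xbar x)"
    and "m \<equiv> (\<lambda>x. muY x - rlim muY xbar)"
    and "s \<equiv> (\<lambda>x. cY xbar x - rlim (cY xbar) xbar)"
    and "I \<equiv> {xbar<..<xbar + \<epsilon>}"
    and "PI \<equiv> measure M {\<omega> \<in> space M. X \<omega> \<in> {xbar<..<xbar + \<epsilon>}}"
  assumes M: "prob_space M"
    and X_rv: "X \<in> borel_measurable M"
    and X_ge: "AE \<omega> in M. X \<omega> \<ge> xbar"
    and X_atom: "measure M {\<omega> \<in> space M. X \<omega> = xbar} > 0"
    and Yp_int: "\<And>x. x \<ge> xbar \<Longrightarrow> integrable M (Yp x)"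
    and Y_int: "integrable M Y"
    and muY_ce: "is_cond_exp_fun M X Y muY"
    and cY_ce: "\<And>x. x \<ge> xbar \<Longrightarrow> is_cond_exp_fun M X (Yp x) (cY x)"
    and consist: "\<And>x. x > xbar \<Longrightarrow> muY x = cY x x"
    \<comment> \<open>A1 (i)\<close>
    and e1: "\<epsilon>1 > 0"
    and dens: "\<And>x. x \<in> {xbar<..<xbar + \<epsilon>1} \<Longrightarrow>
        ((\<lambda>t. measure M {\<omega> \<in> space M. X \<omega> \<le> t}) has_real_derivative fX x) (at x)"
    and fX_cont: "continuous_on {xbar<..<xbar + \<epsilon>1} fX"
    and fX_lim: "\<exists>L. (fX \<longlongrightarrow> L) (at_right xbar) \<and> L > 0"
    \<comment> \<open>A1 (ii)\<close>
    and e2: "\<epsilon>2 > 0"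
    and muY_diff: "\<And>x. x \<in> {xbar<..<xbar + \<epsilon>2} \<Longrightarrow> muY differentiable (at x)"
    and muY_lim: "\<exists>L. (muY \<longlongrightarrow> L) (at_right xbar)"
    and muY_dlim: "\<exists>L. ((\<lambda>x. deriv muY x) \<longlongrightarrow> L) (at_right xbar)"
    \<comment> \<open>A1 (iii)\<close>
    and e3: "\<epsilon>3 > 0"
    and mu0_diff: "\<And>x. x \<in> {xbar<..<xbar + \<epsilon>3} \<Longrightarrow> cY xbar differentiable (at x)"
    and mu0_dlim: "\<exists>L. ((\<lambda>x. deriv (cY xbar) x) \<longlongrightarrow> L) (at_right xbar) \<and> L \<noteq> 0"
    \<comment> \<open>A1 (iv)\<close>
    and ATT_lim: "(ATT \<longlongrightarrow> 0) (at_right xbar)"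
    and ATT_dlim: "\<exists>L. ((\<lambda>x. (ATT x - rlim ATT xbar) / (x - xbar)) \<longlongrightarrow> L) (at_right xbar)"
    \<comment> \<open>The interval I from Theorem 2\<close>
    and e: "\<epsilon> > 0"
    and s_diff: "\<And>x. x \<in> I \<Longrightarrow> s differentiable (at x)"
    and s_mono: "(\<forall>x\<in>I. \<forall>y\<in>I. x < y \<longrightarrow> s x < s y) \<or> (\<forall>x\<in>I. \<forall>y\<in>I. x < y \<longrightarrow> s x > s y)"
    and fS_dens: "\<And>x. x \<in> I \<Longrightarrow>
        ((\<lambda>v. measure M {\<omega> \<in> space M. s (X \<omega>) \<le> v \<and> X \<omega> \<in> I} / PI)
           has_real_derivative fS (s x)) (at (s x))"
    and fS_nz: "\<And>x. x \<in> I \<Longrightarrow> fS (s x) \<noteq> 0"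
    and s_eq: "\<And>x. x \<in> I \<Longrightarrow> \<bar>deriv s x\<bar> = (fX x / PI) / fS (s x)"
  shows "(\<exists>L. ((\<lambda>x. fS (s x)) \<longlongrightarrow> L) (at_right xbar) \<and> L \<noteq> 0) \<and>
         Lim (at_right xbar) (\<lambda>x. ATT x / (x - xbar))
           = rderiv m xbar - sgn (rderiv s xbar) * ((rlim fX xbar / PI) / rlim (\<lambda>x. fS (s x)) xbar)"
proof -
  obtain Lmu where Lmu: "(muY \<longlongrightarrow> Lmu) (at_right xbar)"
    using muY_lim by blast
  obtain Dmu where Dmu: "(deriv muY \<longlongrightarrow> Dmu) (at_right xbar)"
    using muY_dlim by blast
  obtain D0 where D0: "(deriv (cY xbar) \<longlongrightarrow> D0) (at_right xbar)" and "D0 \<noteq> 0"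
    using mu0_dlim by blast
  obtain LX where LX: "(fX \<longlongrightarrow> LX) (at_right xbar)" and "LX > 0"
    using fX_lim by blast
  have "\<forall>\<^sub>F x in at_right xbar. x \<in> {xbar<..<xbar + min \<epsilon> (min \<epsilon>2 \<epsilon>3)}"
    using e e2 e3 by (intro eventually_at_right_real) simp_all
  then have muY_diff': "\<forall>\<^sub>F x in at_right xbar. muY differentiable (at x)"
    and mu0_diff': "\<forall>\<^sub>F x in at_right xbar. cY xbar differentiable (at x)"
    and in_I: "\<forall>\<^sub>F x in at_right xbar. x \<in> I"
    and ATT_eq: "\<forall>\<^sub>F x in at_right xbar. ATT x = muY x - cY xbar x"
    by (auto elim!: eventually_mono intro: muY_diff mu0_diff simp: I_def ATT_def consist)
  have s_eq': "\<forall>\<^sub>F x in at_right xbar. \<bar>deriv s x\<bar> = fX x / PI / fS (s x)"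
    using in_I by eventually_elim (rule s_eq)
  have mu0_lim: "(cY xbar \<longlongrightarrow> Lmu) (at_right xbar)"
    by (rule tendsto_of_diff_tendsto_0[OF ATT_eq ATT_lim Lmu])
  have deriv_s: "(deriv s \<longlongrightarrow> D0) (at_right xbar)"
    using D0 mu0_diff' by (rule Lim_transform_eventually[OF _ eventually_mono])
      (simp add: s_def deriv_diff_const)
  note density =
    tendsto_divisor_of_abs_eq_divide[OF s_eq' deriv_s \<open>D0 \<noteq> 0\<close> LX trivial_limit_at_right_real]
  have "rderiv m xbar = Dmu"
    unfolding m_def by (rule rderiv_centered_eq_deriv_limit[OF muY_diff' Lmu Dmu])
  moreover have "rderiv s xbar = D0"
    unfolding s_def by (rule rderiv_centered_eq_deriv_limit[OF mu0_diff' mu0_lim D0])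
  moreover have "Lim (at_right xbar) (\<lambda>x. ATT x / (x - xbar)) = Dmu - D0"
    by (rule Lim_quotient_of_eventually_diff[OF ATT_eq muY_diff' Lmu Dmu mu0_diff' mu0_lim D0])
  moreover have "D0 = sgn D0 * ((LX / PI) / ((LX / PI) / \<bar>D0\<bar>))"
    using density(1) \<open>LX > 0\<close> \<open>D0 \<noteq> 0\<close> by (simp add: sgn_mult_abs)
  ultimately show ?thesis
    using density \<open>LX > 0\<close> \<open>D0 \<noteq> 0\<close>
    by (auto simp: rlim_eqI[OF LX] rlim_eqI[OF density(2)])
qed

end
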